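(* Let $G=(V,E)$ be a graph and $\mathbb{F}$ a field. Suppose there exist a proper coloring $c:V\to[m]$ of $G$ with locality $\ell$ and $m$ vectors in $\mathbb{F}^t$ such that every $\ell$ of them are linearly independent over $\mathbb{F}$. Then $\mathrm{minrk}_{\mathbb{F}}(\overline{G})\le t$.
   Context: $\overline{G}$ is the complement of $G$. The locality of a proper coloring is the maximum over vertices $v$ of the number of distinct colors on $\{v\}\cup N(v)$. For a graph $H$ on $[n]$, a matrix $M\in\mathbb{F}^{n\times n}$ represents $H$ if $M_{i,i}\ne0$ for all $i$ and $M_{i,j}=0$ for distinct non-adjacent $i,j$; $\mathrm{minrk}_{\mathbb{F}}(H)$ is the minimum rank of such a matrix. *)

theory Defs
  imports "Jordan_Normal_Form.DL_Rank"
begin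

definition is_graph :: "nat \<Rightarrow> (nat \<Rightarrow> nat \<Rightarrow> bool) \<Rightarrow> bool" where
  "is_graph n E \<longleftrightarrow> (\<forall>i j. E i j \<longrightarrow> i < n \<and> j < n \<and> i \<noteq> j \<and> E j i)"

definition complement_graph :: "nat \<Rightarrow> (nat \<Rightarrow> nat \<Rightarrow> bool) \<Rightarrow> (nat \<Rightarrow> nat \<Rightarrow> bool)" where
  "complement_graph n E = (\<lambda>i j. i < n \<and> j < n \<and> i \<noteq> j \<and> \<not> E i j)"

definition nbhd :: "nat \<Rightarrow> (nat \<Rightarrow> nat \<Rightarrow> bool) \<Rightarrow> nat \<Rightarrow> nat set" where
  "nbhd n E v = {u. u < n \<and> E v u}"

definition proper_coloring :: "nat \<Rightarrow> (nat \<Rightarrow> nat \<Rightarrow> bool) \<Rightarrow> nat \<Rightarrow> (nat \<Rightarrow> nat) \<Rightarrow> bool" where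
  "proper_coloring n E m c \<longleftrightarrow> (\<forall>v<n. c v < m) \<and> (\<forall>u<n. \<forall>v<n. E u v \<longrightarrow> c u \<noteq> c v)"

definition locality :: "nat \<Rightarrow> (nat \<Rightarrow> nat \<Rightarrow> bool) \<Rightarrow> (nat \<Rightarrow> nat) \<Rightarrow> nat" where
  "locality n E c = Max ((\<lambda>v. card (c ` ({v} \<union> nbhd n E v))) ` {0..<n})"

definition lin_indep_family :: "nat \<Rightarrow> (nat \<Rightarrow> 'a::field vec) \<Rightarrow> nat set \<Rightarrow> bool" where
  "lin_indep_family t u S \<longleftrightarrow>
     (\<forall>a :: nat \<Rightarrow> 'a. (\<forall>k<t. (\<Sum>i\<in>S. a i * (u i $ k)) = 0) \<longrightarrow> (\<forall>i\<in>S. a i = 0))"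

definition represents :: "nat \<Rightarrow> (nat \<Rightarrow> nat \<Rightarrow> bool) \<Rightarrow> 'a::field mat \<Rightarrow> bool" where
  "represents n H M \<longleftrightarrow> M \<in> carrier_mat n n \<and> (\<forall>i<n. M $$ (i, i) \<noteq> 0) \<and>
     (\<forall>i<n. \<forall>j<n. i \<noteq> j \<and> \<not> H i j \<longrightarrow> M $$ (i, j) = 0)"

definition minrk :: "'a::field itself \<Rightarrow> nat \<Rightarrow> (nat \<Rightarrow> nat \<Rightarrow> bool) \<Rightarrow> nat" where
  "minrk _ n H = Min {vec_space.rank n M | M :: 'a mat. represents n H M}"

end

theory Submission
  imports Defs "HOL-Library.Function_Algebras"
begin

text \<open>For a vertex \<open>v\<close> let \<open>K v\<close> be the set of colours on its closed neighbourhood;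
  it has at most \<open>l\<close> elements, so the vectors \<open>u j\<close>, \<open>j \<in> K v\<close>, are linearly independent.
  Hence there is a functional \<open>y v\<close> on \<open>\<F>\<^sup>t\<close> which is nonzero on \<open>u (c v)\<close> and vanishes on
  \<open>u j\<close> for the other colours \<open>j \<in> K v\<close>. The matrix \<open>M v w = y v (u (c w))\<close> has nonzero
  diagonal, vanishes on the edges of \<open>G\<close> (as \<open>c\<close> is proper, \<open>c w \<in> K v - {c v}\<close> for a
  neighbour \<open>w\<close>), and is a sum of \<open>t\<close> rank-one matrices.\<close>

lemma sum_apply: "(\<Sum>x\<in>A. f x) k = (\<Sum>x\<in>A. f x k)"
  by (induct A rule: infinite_finite_induct) auto

lemma lin_indep_family_subset:
  assumes "lin_indep_family t u S" "T \<subseteq> S" "finite S"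
  shows "lin_indep_family t u T"
  unfolding lin_indep_family_def
proof (intro allI impI ballI)
  fix a i assume combination: "\<forall>k<t. (\<Sum>j\<in>T. a j * u j $ k) = 0" and "i \<in> T"
  define a' where "a' j = (if j \<in> T then a j else 0)" for j
  have "(\<Sum>j\<in>S. a' j * u j $ k) = (\<Sum>j\<in>T. a j * u j $ k)" for k
  proof -
    have "(\<Sum>j\<in>S. a' j * u j $ k) = (\<Sum>j\<in>T. a' j * u j $ k)"
      by (rule sum.mono_neutral_right) (use assms(2,3) in \<open>auto simp: a'_def\<close>)
    then show ?thesis by (simp add: a'_def)
  qed
  then have "\<forall>k<t. (\<Sum>j\<in>S. a' j * u j $ k) = 0"
    using combination by simp
  then have "a' i = 0"
    using assms(1,2) \<open>i \<in> T\<close> unfolding lin_indep_family_def by blast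
  then show "a i = 0" using \<open>i \<in> T\<close> by (simp add: a'_def)
qed

text \<open>The functional is obtained by extending \<open>u i \<mapsto> 1\<close>, \<open>u j \<mapsto> 0\<close> linearly from the
  independent set \<open>{u j | j \<in> S}\<close>, viewed in the space of functions \<open>nat \<Rightarrow> 'a\<close>
  (coordinates \<open>k \<ge> t\<close> set to zero); \<open>y k\<close> is its value on the \<open>k\<close>-th unit vector.\<close>

lemma lin_indep_family_separating_functional:
  fixes u :: "nat \<Rightarrow> 'a::field vec"
  assumes fin: "finite S" and i: "i \<in> S" and ind: "lin_indep_family t u S"
  shows "\<exists>y. (\<Sum>k<t. y k * u i $ k) \<noteq> 0 \<and> (\<forall>j\<in>S - {i}. (\<Sum>k<t. y k * u j $ k) = 0)"
proof -
  define scale :: "'a \<Rightarrow> (nat \<Rightarrow> 'a) \<Rightarrow> nat \<Rightarrow> 'a" where "scale a f = (\<lambda>k. a * f k)" for a f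
  interpret vs: vector_space_pair scale "(*) :: 'a \<Rightarrow> 'a \<Rightarrow> 'a"
    by unfold_locales (auto simp: scale_def algebra_simps fun_eq_iff)
  define W where "W j = (\<lambda>k. if k < t then u j $ k else 0)" for j
  define e :: "nat \<Rightarrow> nat \<Rightarrow> 'a" where "e k = (\<lambda>k'. if k' = k then 1 else 0)" for k
  have inj: "inj_on W S"
  proof (rule inj_onI)
    fix a b assume ab: "a \<in> S" "b \<in> S" "W a = W b"
    define coeff :: "nat \<Rightarrow> 'a" where "coeff j = (if j = a then 1 else 0) - (if j = b then 1 else 0)" for j
    have "(\<Sum>j\<in>S. coeff j * u j $ k) = u a $ k - u b $ k" for k
      using fin ab(1,2)
      by (simp add: coeff_def left_diff_distrib sum_subtractf if_distrib[of "\<lambda>x. x * _"] cong: if_cong)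
    moreover have "u a $ k = u b $ k" if "k < t" for k
      using fun_cong[OF ab(3), of k] that by (simp add: W_def)
    ultimately have "\<forall>k<t. (\<Sum>j\<in>S. coeff j * u j $ k) = 0"
      by simp
    then have "coeff a = 0"
      using ind ab(1) unfolding lin_indep_family_def by blast
    then show "a = b" by (auto simp: coeff_def split: if_splits)
  qed
  have "vs.vs1.independent (W ` S)"
  proof (rule vs.vs1.independent_if_scalars_zero)
    fix f x assume combination: "(\<Sum>x\<in>W ` S. scale (f x) x) = 0" and "x \<in> W ` S"
    have reindexed: "(\<Sum>j\<in>S. scale (f (W j)) (W j)) = 0"
      using combination by (simp add: sum.reindex[OF inj])
    have "(\<Sum>j\<in>S. f (W j) * u j $ k) = 0" if "k < t" for k
      using fun_cong[OF reindexed, of k] that by (simp add: sum_apply scale_def W_def)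
    then have "\<forall>j\<in>S. f (W j) = 0"
      using ind[unfolded lin_indep_family_def, rule_format, of "\<lambda>j. f (W j)"] by blast
    then show "f x = 0" using \<open>x \<in> W ` S\<close> by blast
  qed (use fin in simp)
  then obtain g where g_linear: "Vector_Spaces.linear scale (*) g"
    and g_W: "\<forall>x\<in>W ` S. g x = (if x = W i then 1 else 0)"
    using vs.linear_independent_extend[of "W ` S" "\<lambda>x. if x = W i then 1 else 0"] by blast
  interpret g: Vector_Spaces.linear scale "(*)" g by (fact g_linear)
  have g_coords: "g (W j) = (\<Sum>k<t. g (e k) * u j $ k)" for j
  proof -
    have "W j = (\<Sum>k<t. scale (u j $ k) (e k))"
      by (rule ext) (simp add: sum_apply scale_def e_def W_def if_distrib[of "\<lambda>x. _ * x"] cong: if_cong)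
    then show ?thesis by (simp add: g.sum g.scale mult.commute)
  qed
  show ?thesis
  proof (intro exI conjI ballI)
    show "(\<Sum>k<t. g (e k) * u i $ k) \<noteq> 0" using g_W i g_coords[of i] by auto
    fix j assume "j \<in> S - {i}"
    moreover from this have "W j \<noteq> W i" using inj i by (auto dest: inj_onD)
    ultimately show "(\<Sum>k<t. g (e k) * u j $ k) = 0" using g_W g_coords[of j] by auto
  qed
qed

lemma rank_mat_sum_products_le:
  fixes Y X :: "nat \<Rightarrow> nat \<Rightarrow> 'a::field"
  shows "vec_space.rank n (mat n n (\<lambda>(r, s). \<Sum>k<t. Y r k * X k s)) \<le> t"
proof (induction t)
  case 0
  have "mat n n (\<lambda>(r, s). \<Sum>k<0. Y r k * X k s) = (0\<^sub>m n n :: 'a mat)"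
    by (rule eq_matI) auto
  then show ?case by (simp only: vec_space.rank_0I le_refl)
next
  case (Suc t)
  let ?A = "mat n n (\<lambda>(r, s). \<Sum>k<t. Y r k * X k s) :: 'a mat"
  let ?B = "mat n n (\<lambda>(r, s). Y r t * X t s) :: 'a mat"
  have "mat n n (\<lambda>(r, s). \<Sum>k<Suc t. Y r k * X k s) = ?A + ?B"
    by (rule eq_matI) auto
  moreover have "vec_space.rank n (?A + ?B) \<le> vec_space.rank n ?A + vec_space.rank n ?B"
    by (rule vec_space.rank_subadditive) auto
  moreover have "vec_space.rank n ?B \<le> 1"
    by (rule vec_space.rank_le_1_product_entries[of _ n n "\<lambda>r. Y r t" "\<lambda>s. X t s"]) auto
  ultimately show ?case using Suc.IH by simp
qed

lemma minrk_le_rank: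
  fixes M :: "'a::field mat"
  assumes "represents n H M"
  shows "minrk TYPE('a) n H \<le> vec_space.rank n M"
proof -
  have "{vec_space.rank n M | M :: 'a mat. represents n H M} \<subseteq> {0..n}"
    using vec_space.rank_le_nc by (auto simp: represents_def)
  then show ?thesis
    unfolding minrk_def using assms by (intro Min_le) (auto dest: finite_subset)
qed

lemma represents_complement_graph:
  assumes "M \<in> carrier_mat n n" "\<forall>i<n. M $$ (i, i) \<noteq> 0" "\<forall>i<n. \<forall>j<n. E i j \<longrightarrow> M $$ (i, j) = 0"
  shows "represents n (complement_graph n E) M"
  using assms by (auto simp: represents_def complement_graph_def)

lemma closed_nbhd_colors_subset:
  assumes "proper_coloring n E m c" "v < n"
  shows "c ` ({v} \<union> nbhd n E v) \<subseteq> {0..<m}"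
  using assms by (auto simp: proper_coloring_def nbhd_def)

lemma card_closed_nbhd_colors_le_locality:
  assumes "v < n"
  shows "card (c ` ({v} \<union> nbhd n E v)) \<le> locality n E c"
  unfolding locality_def using assms by (intro Max_ge) auto

lemma locality_le_colors:
  assumes "proper_coloring n E m c" "0 < n"
  shows "locality n E c \<le> m"
proof -
  have "locality n E c \<in> (\<lambda>v. card (c ` ({v} \<union> nbhd n E v))) ` {0..<n}"
    unfolding locality_def using assms(2) by (intro Max_in) auto
  then obtain v where "v < n" "locality n E c = card (c ` ({v} \<union> nbhd n E v))"
    by auto
  with closed_nbhd_colors_subset[OF assms(1)] show ?thesis
    by (metis card_atLeastLessThan card_mono finite_atLeastLessThan diff_zero)
qed

lemma lin_indep_family_closed_nbhd_colors:
  assumes "proper_coloring n E m c" "v < n"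
    and "\<forall>S. S \<subseteq> {0..<m} \<and> card S = locality n E c \<longrightarrow> lin_indep_family t u S"
  shows "lin_indep_family t u (c ` ({v} \<union> nbhd n E v))"
proof -
  let ?K = "c ` ({v} \<union> nbhd n E v)"
  have "card ?K \<le> locality n E c" "locality n E c \<le> card {0..<m}" "?K \<subseteq> {0..<m}"
    using assms(1,2) card_closed_nbhd_colors_le_locality locality_le_colors
      closed_nbhd_colors_subset by auto
  then obtain S where "?K \<subseteq> S" "S \<subseteq> {0..<m}" "card S = locality n E c"
    using exists_subset_between by (metis finite_atLeastLessThan)
  then show ?thesis
    using assms(3) lin_indep_family_subset by (metis finite_atLeastLessThan finite_subset)
qed

lemma proper_coloring_nbhd_color:
  assumes "proper_coloring n E m c" "v < n" "w < n" "E v w"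
  shows "c w \<in> c ` ({v} \<union> nbhd n E v) - {c v}"
proof -
  have "c w \<noteq> c v" using assms unfolding proper_coloring_def by metis
  moreover have "w \<in> nbhd n E v" using assms(3,4) by (simp add: nbhd_def)
  ultimately show ?thesis by blast
qed

theorem mainTheorem10:
  fixes n m t l :: nat and E :: "nat \<Rightarrow> nat \<Rightarrow> bool" and c :: "nat \<Rightarrow> nat"
    and u :: "nat \<Rightarrow> 'a::field vec"
  assumes "is_graph n E"
    and "proper_coloring n E m c"
    and "locality n E c = l"
    and "\<forall>i<m. u i \<in> carrier_vec t"
    and "\<forall>S. S \<subseteq> {0..<m} \<and> card S = l \<longrightarrow> lin_indep_family t u S"
  shows "minrk TYPE('a) n (complement_graph n E) \<le> t"
proof -
  define K where "K v = c ` ({v} \<union> nbhd n E v)" for v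
  have "\<exists>y. (\<Sum>k<t. y k * u (c v) $ k) \<noteq> 0 \<and>
      (\<forall>j\<in>K v - {c v}. (\<Sum>k<t. y k * u j $ k) = 0)" if "v < n" for v
    using lin_indep_family_closed_nbhd_colors[OF assms(2) that] assms(3,5)
    by (intro lin_indep_family_separating_functional) (simp_all add: K_def nbhd_def)
  then obtain Y where Y: "\<And>v. v < n \<Longrightarrow> (\<Sum>k<t. Y v k * u (c v) $ k) \<noteq> 0 \<and>
      (\<forall>j\<in>K v - {c v}. (\<Sum>k<t. Y v k * u j $ k) = 0)"
    by metis
  define M :: "'a mat" where "M = mat n n (\<lambda>(v, w). \<Sum>k<t. Y v k * u (c w) $ k)"
  have "represents n (complement_graph n E) M"
    using Y proper_coloring_nbhd_color[OF assms(2)]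
    by (intro represents_complement_graph) (auto simp: M_def K_def)
  then have "minrk TYPE('a) n (complement_graph n E) \<le> vec_space.rank n M"
    by (rule minrk_le_rank)
  also have "\<dots> \<le> t"
    unfolding M_def by (rule rank_mat_sum_products_le[where X = "\<lambda>k w. u (c w) $ k"])
  finally show ?thesis .
qed

end
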